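(* Let $d\ge2$ and $1\le N\le M$ be integers with $d\mid(M-N)$. For $\boldsymbol\theta=(\theta_1,\dots,\theta_{d-1})\in[0,2\pi)^{d-1}$ let $U_{\boldsymbol\theta}=|0\rangle\langle0|+\sum_{k=1}^{d-1}e^{-i\theta_k}|k\rangle\langle k|$ and $|e_{\boldsymbol\theta}\rangle=d^{-1/2}\big(|0\rangle+\sum_{k=1}^{d-1}e^{-i\theta_k}|k\rangle\big)$. Then there exist a finite-dimensional Hilbert space $\mathcal H_A$, a state $\sigma$ on $(\mathbb C^d)^{\otimes N}\otimes\mathcal H_A\otimes(\mathbb C^d)^{\otimes M}$ and a quantum channel $\mathcal C$ from $(\mathbb C^d)^{\otimes N}\otimes\mathcal H_A\otimes(\mathbb C^d)^{\otimes M}$ to $(\mathbb C^d)^{\otimes M}$ such that for all $\boldsymbol\theta$, $$\langle e_{\boldsymbol\theta}|^{\otimes M}\,\mathcal C\big((U_{\boldsymbol\theta}^{\otimes N}\otimes I)\sigma(U_{\boldsymbol\theta}^{\otimes N}\otimes I)^\dagger\big)\,|e_{\boldsymbol\theta}\rangle^{\otimes M}\ge1-2(M+1)^{\frac{d(d-1)}{2}}\exp\!\Big[-\frac{2N^2}{d^2M}\Big].$$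
   Context: $\{|0\rangle,\dots,|d-1\rangle\}$ is the computational basis of $\mathbb C^d$; $U_{\boldsymbol\theta}^{\otimes N}$ acts on the factor $(\mathbb C^d)^{\otimes N}$ and $I$ on the remaining factors. *)

theory Defs
  imports "Jordan_Normal_Form.Matrix"
begin

definition adj :: "complex mat \<Rightarrow> complex mat" where
  "adj A = mat (dim_col A) (dim_row A) (\<lambda>(i,j). cnj (A $$ (j,i)))"

(* Kronecker (tensor) product; index i of A\<otimes>B corresponds to (i div dim B, i mod dim B) *)
definition kron :: "complex mat \<Rightarrow> complex mat \<Rightarrow> complex mat" where
  "kron A B = mat (dim_row A * dim_row B) (dim_col A * dim_col B)
     (\<lambda>(i,j). A $$ (i div dim_row B, j div dim_col B) * B $$ (i mod dim_row B, j mod dim_col B))"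

fun kron_pow :: "nat \<Rightarrow> complex mat \<Rightarrow> complex mat" where
  "kron_pow 0 A = 1\<^sub>m 1"
| "kron_pow (Suc n) A = kron A (kron_pow n A)"

definition psd :: "nat \<Rightarrow> complex mat \<Rightarrow> bool" where
  "psd n A \<longleftrightarrow> A \<in> carrier_mat n n \<and>
     (\<forall>v :: nat \<Rightarrow> complex. let q = (\<Sum>i<n. \<Sum>j<n. cnj (v i) * A $$ (i,j) * v j)
                                in Im q = 0 \<and> Re q \<ge> 0)"

definition density :: "nat \<Rightarrow> complex mat \<Rightarrow> bool" where
  "density n \<rho> \<longleftrightarrow> psd n \<rho> \<and> (\<Sum>i<n. \<rho> $$ (i,i)) = 1"

definition msum :: "nat \<Rightarrow> nat \<Rightarrow> nat \<Rightarrow> (nat \<Rightarrow> complex mat) \<Rightarrow> complex mat" where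
  "msum n m K f = mat n m (\<lambda>(i,j). \<Sum>k<K. f k $$ (i,j))"

(* quantum channel (CPTP map) from operators on C^din to operators on C^dout,
   given in Kraus form: C(\<rho>) = \<Sum>_k K_k \<rho> K_k^\<dagger> with \<Sum>_k K_k^\<dagger> K_k = I *)
definition is_channel :: "nat \<Rightarrow> nat \<Rightarrow> (complex mat \<Rightarrow> complex mat) \<Rightarrow> bool" where
  "is_channel din dout C \<longleftrightarrow>
     (\<exists>Ks :: complex mat list.
        (\<forall>K \<in> set Ks. K \<in> carrier_mat dout din) \<and>
        msum din din (length Ks) (\<lambda>k. adj (Ks ! k) * Ks ! k) = 1\<^sub>m din \<and>
        (\<forall>\<rho> \<in> carrier_mat din din.
            C \<rho> = msum dout dout (length Ks) (\<lambda>k. Ks ! k * \<rho> * adj (Ks ! k))))"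

definition phase :: "(nat \<Rightarrow> real) \<Rightarrow> nat \<Rightarrow> complex" where
  "phase \<theta> k = (if k = 0 then 1 else cis (- \<theta> k))"

definition U_theta :: "nat \<Rightarrow> (nat \<Rightarrow> real) \<Rightarrow> complex mat" where
  "U_theta d \<theta> = mat d d (\<lambda>(i,j). if i = j then phase \<theta> i else 0)"

definition e_theta :: "nat \<Rightarrow> (nat \<Rightarrow> real) \<Rightarrow> complex mat" where
  "e_theta d \<theta> = mat d 1 (\<lambda>(i,j). phase \<theta> i / complex_of_real (sqrt (real d)))"

definition expval :: "complex mat \<Rightarrow> complex mat \<Rightarrow> complex" where
  "expval \<psi> A = (adj \<psi> * A * \<psi>) $$ (0,0)"

end

theory Submission
  imports Defs "HOL-Probability.Hoeffding"
begin

(* Let s = (M - N) / d and let G be the set of base-d strings of length M in which every digit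
   occurs at least s times. Deleting s occurrences of each digit maps z in G to a string f z of
   length N, and U_theta^(x M) |z> = c * U_theta^(x N) |f z> with a phase c depending on theta
   but not on z. So prepare sum_x sqrt(|f^-1 x| / |G|) |x>, let the unknown phase act, and apply the
   isometry |x> |-> |f^-1 x|^(-1/2) sum (z in f^-1 x) |z>: the result is, up to a global phase, the
   normalised projection of |e_theta>^(x M) onto span G, whose fidelity with |e_theta>^(x M) is
   |G| / d^M. The ancilla is one-dimensional and the (C^d)^(x M) input register is discarded.
   Each digit count of a uniformly random z < d^M is Binomial(M, 1/d), so Hoeffding's inequality
   and a union bound over the d digits give |G| / d^M >= 1 - d exp(-2 N^2 / (d^2 M)). *)

(* Base-d digits are read most significant first, as in the index convention of kron. *)
fun digit_count :: "nat \<Rightarrow> nat \<Rightarrow> nat \<Rightarrow> nat \<Rightarrow> nat" where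
  "digit_count d k 0 x = 0"
| "digit_count d k (Suc n) x =
     (if x div d ^ n = k then 1 else 0) + digit_count d k n (x mod d ^ n)"

fun digit_phase :: "nat \<Rightarrow> (nat \<Rightarrow> real) \<Rightarrow> nat \<Rightarrow> nat \<Rightarrow> complex" where
  "digit_phase d \<theta> 0 x = 1"
| "digit_phase d \<theta> (Suc n) x = phase \<theta> (x div d ^ n) * digit_phase d \<theta> n (x mod d ^ n)"

lemma nat_eq_iff_div_mod_eq: "(x = y) \<longleftrightarrow> x div m = y div m \<and> x mod m = (y::nat) mod m"
  by (metis div_mult_mod_eq)

lemma leading_digit_less:
  assumes "x < d ^ Suc n"
  shows "x div d ^ n < (d::nat)"
  using assms by (cases "d ^ n = 0") (auto simp: div_less_iff_less_mult mult.commute)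

lemma sum_digit_count: "x < d ^ n \<Longrightarrow> (\<Sum>k<d. digit_count d k n x) = n"
proof (induction n arbitrary: x)
  case (Suc n)
  then have "x div d ^ n < d" "0 < d" by (auto intro: leading_digit_less gr0I)
  with Suc show ?case by (simp add: sum.distrib)
qed simp

lemma digit_count_realisable:
  assumes "(\<Sum>k<d. c k) = n"
  shows "\<exists>x<d ^ n. \<forall>k<d. digit_count d k n x = c k"
  using assms
proof (induction n arbitrary: c)
  case (Suc n)
  obtain h where h: "h < d" "c h > 0"
  proof -
    have "\<exists>k<d. c k \<noteq> 0"
    proof (rule ccontr)
      assume "\<not> (\<exists>k<d. c k \<noteq> 0)"
      then have "(\<Sum>k<d. c k) = 0" by simp
      with Suc.prems show False by simp
    qed
    then show ?thesis using that by blast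
  qed
  define c' where "c' k = c k - (if k = h then 1 else 0)" for k
  have c: "c k = c' k + (if k = h then 1 else 0)" for k using h by (auto simp: c'_def)
  have "(\<Sum>k<d. c' k) = n"
    using Suc.prems h by (subst (asm) c) (simp add: sum.distrib)
  from Suc.IH[OF this] obtain y where y: "y < d ^ n" "\<forall>k<d. digit_count d k n y = c' k"
    by blast
  have "h * d ^ n + y < d ^ Suc n"
    using y(1) h(1) mult_le_mono1[of "Suc h" d "d ^ n"] by simp
  moreover have "(h * d ^ n + y) div d ^ n = h" "(h * d ^ n + y) mod d ^ n = y"
    using y(1) h(1) by auto
  ultimately show ?case using y c by (intro exI[of _ "h * d ^ n + y"]) (auto simp: add.commute)
qed simp

lemma card_filter_lessThan: "card {x. x < m \<and> P x} = (\<Sum>x<(m::nat). if P x then 1 else 0)"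
  by (simp add: sum.If_cases Int_def conj_commute)

lemma card_digit_count_eq:
  assumes "k < d"
  shows "card {x. x < d ^ n \<and> digit_count d k n x = j} = (n choose j) * (d - 1) ^ (n - j)"
  using assms
proof (induction n arbitrary: j)
  case 0 then show ?case by (cases j) (auto simp: card_eq_0_iff)
next
  case (Suc n)
  let ?A = "\<lambda>j. card {x. x < d ^ n \<and> digit_count d k n x = j}"
  let ?A' = "card {x. x < d ^ n \<and> digit_count d k n x + 1 = j}"
  have "card {x. x < d ^ Suc n \<and> digit_count d k (Suc n) x = j}
      = (\<Sum>a<d. \<Sum>b<d ^ n. if (if a = k then 1 else 0) + digit_count d k n b = j then 1 else 0)"
    using Suc.prems by (simp add: card_filter_lessThan sum_mult_product mult.commute)
  also have "\<dots> = (\<Sum>a<d. if a = k then ?A' else ?A j)"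
    by (intro sum.cong refl) (auto simp: card_filter_lessThan)
  also have "\<dots> = ?A' + (d - 1) * ?A j"
    using Suc.prems by (simp add: sum.remove[of "{..<d}" k] card_Diff_singleton)
  also have "\<dots> = (Suc n choose j) * (d - 1) ^ (Suc n - j)"
  proof (cases j)
    case 0
    then show ?thesis using Suc.IH[of 0] Suc.prems by simp
  next
    case (Suc j')
    then have A': "?A' = ?A j'" by simp
    show ?thesis
    proof (cases "j' < n")
      case True
      then have "(d - 1) * (d - 1) ^ (n - Suc j') = (d - 1) ^ (n - j')"
        by (metis Suc_diff_Suc power_Suc)
      then show ?thesis using Suc A' Suc.IH[of j'] Suc.IH[of "Suc j'"] Suc.prems
        by (simp add: add_mult_distrib add_mult_distrib2 mult.assoc mult.left_commute)
    qed (use Suc A' Suc.IH[of j'] Suc.IH[of "Suc j'"] Suc.prems in simp)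
  qed
  finally show ?case .
qed

lemma norm_phase [simp]: "norm (phase \<theta> k) = 1"
  by (simp add: phase_def)

lemma norm_digit_phase: "norm (digit_phase d \<theta> n x) = 1"
  by (induction n arbitrary: x) (simp_all add: norm_mult)

lemma digit_phase_eq_prod:
  "x < d ^ n \<Longrightarrow> digit_phase d \<theta> n x = (\<Prod>k<d. phase \<theta> k ^ digit_count d k n x)"
proof (induction n arbitrary: x)
  case (Suc n)
  define h where "h = x div d ^ n"
  have h: "h < d" using Suc.prems by (simp add: h_def leading_digit_less)
  have "(\<Prod>k<d. phase \<theta> k ^ digit_count d k (Suc n) x)
      = (\<Prod>k<d. (if k = h then phase \<theta> k else 1) * phase \<theta> k ^ digit_count d k n (x mod d ^ n))"
    by (intro prod.cong) (auto simp: h_def power_add)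
  also have "\<dots> = phase \<theta> h * (\<Prod>k<d. phase \<theta> k ^ digit_count d k n (x mod d ^ n))"
    by (simp add: prod.distrib h)
  finally show ?case using Suc.IH[of "x mod d ^ n"] h by (simp add: h_def gr0I)
qed simp

lemma digit_phase_shift:
  assumes "x < d ^ N" and "z < d ^ M"
    and counts: "\<And>k. k < d \<Longrightarrow> digit_count d k N x + s = digit_count d k M z"
  shows "cnj (digit_phase d \<theta> M z) * digit_phase d \<theta> N x = cnj (\<Prod>k<d. phase \<theta> k ^ s)"
proof -
  have "digit_phase d \<theta> M z = (\<Prod>k<d. phase \<theta> k ^ (digit_count d k N x + s))"
    using assms(2) counts by (simp add: digit_phase_eq_prod)
  also have "\<dots> = digit_phase d \<theta> N x * (\<Prod>k<d. phase \<theta> k ^ s)"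
    using assms(1) by (simp add: digit_phase_eq_prod power_add prod.distrib)
  finally have "cnj (digit_phase d \<theta> M z) * digit_phase d \<theta> N x
      = (digit_phase d \<theta> N x * cnj (digit_phase d \<theta> N x)) * cnj (\<Prod>k<d. phase \<theta> k ^ s)"
    by (simp add: mult_ac)
  also have "digit_phase d \<theta> N x * cnj (digit_phase d \<theta> N x) = 1"
    by (simp flip: complex_norm_square add: norm_digit_phase)
  finally show ?thesis by simp
qed

lemma card_digit_count_less_eq_binomial:
  assumes "k < d"
  shows "real (card {z. z < d ^ M \<and> digit_count d k M z < s}) / real d ^ M
       = measure_pmf.prob (binomial_pmf M (1 / real d)) {..<s}"
proof -
  have p: "1 / real d \<in> {0..1}" using assms by simp
  have "card {z. z < d ^ M \<and> digit_count d k M z < s}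
      = card (\<Union>j<s. {z. z < d ^ M \<and> digit_count d k M z = j})"
    by (rule arg_cong[where f = card]) auto
  also have "\<dots> = (\<Sum>j<s. card {z. z < d ^ M \<and> digit_count d k M z = j})"
    by (rule card_UN_disjoint) auto
  also have "\<dots> = (\<Sum>j<s. (M choose j) * (d - 1) ^ (M - j))"
    using card_digit_count_eq[OF assms] by simp
  finally have "real (card {z. z < d ^ M \<and> digit_count d k M z < s}) / real d ^ M
      = (\<Sum>j<s. real (M choose j) * real (d - 1) ^ (M - j) / real d ^ M)"
    by (simp add: sum_divide_distrib)
  also have "\<dots> = (\<Sum>j<s. pmf (binomial_pmf M (1 / real d)) j)"
  proof (intro sum.cong refl)
    fix j
    show "real (M choose j) * real (d - 1) ^ (M - j) / real d ^ M = pmf (binomial_pmf M (1 / real d)) j"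
    proof (cases "j \<le> M")
      case True
      have "1 - 1 / real d = real (d - 1) / real d"
        using assms by (simp add: field_simps of_nat_diff)
      then have "pmf (binomial_pmf M (1 / real d)) j
          = real (M choose j) * real (d - 1) ^ (M - j) / (real d ^ j * real d ^ (M - j))"
        using p by (simp add: power_divide)
      also have "real d ^ j * real d ^ (M - j) = real d ^ M"
        using True by (simp flip: power_add)
      finally show ?thesis by simp
    next
      case False
      then show ?thesis using p by (simp add: binomial_eq_0)
    qed
  qed
  also have "\<dots> = measure_pmf.prob (binomial_pmf M (1 / real d)) {..<s}"
    by (simp add: measure_measure_pmf_finite)
  finally show ?thesis .
qed

lemma card_digit_count_less_le_exp:
  assumes "k < d" and "0 < M" and "0 \<le> t" and "real s \<le> real M / real d - t"
  shows "real (card {z. z < d ^ M \<and> digit_count d k M z < s}) / real d ^ M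
       \<le> exp (- 2 * t\<^sup>2 / real M)"
proof -
  have "{..<s} \<subseteq> {x. real x \<le> real M * (1 / real d) - t}" using assms(4) by auto
  then have "measure_pmf.prob (binomial_pmf M (1 / real d)) {..<s}
      \<le> measure_pmf.prob (binomial_pmf M (1 / real d)) {x. real x \<le> real M * (1 / real d) - t}"
    by (rule measure_pmf.finite_measure_mono) simp
  also have "\<dots> \<le> exp (- 2 * t\<^sup>2 / real M)"
    using assms by (intro binomial_distribution.prob_le) (auto simp: binomial_distribution_def)
  finally show ?thesis by (simp add: card_digit_count_less_eq_binomial[OF assms(1)])
qed

definition all_digits_frequent :: "nat \<Rightarrow> nat \<Rightarrow> nat \<Rightarrow> nat set" where
  "all_digits_frequent d M s = {z. z < d ^ M \<and> (\<forall>k<d. s \<le> digit_count d k M z)}"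

lemma all_digits_frequent_nonempty:
  assumes "0 < d"
  shows "all_digits_frequent d (N + d * s) s \<noteq> {}"
proof -
  have "(\<Sum>k<d. s + (if k = 0 then N else 0)) = N + d * s"
    using assms by (simp add: sum.distrib)
  from digit_count_realisable[OF this] show ?thesis
    by (fastforce simp: all_digits_frequent_def)
qed

lemma exists_digit_count_reduction:
  "\<exists>f. \<forall>z \<in> all_digits_frequent d (N + d * s) s.
      f z < d ^ N \<and> (\<forall>k<d. digit_count d k N (f z) + s = digit_count d k (N + d * s) z)"
proof -
  have "\<exists>x<d ^ N. \<forall>k<d. digit_count d k N x + s = digit_count d k (N + d * s) z"
    if "z \<in> all_digits_frequent d (N + d * s) s" for z
  proof -
    from that have z: "z < d ^ (N + d * s)" and frequent: "\<forall>k<d. s \<le> digit_count d k (N + d * s) z"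
      by (auto simp: all_digits_frequent_def)
    have "(\<Sum>k<d. digit_count d k (N + d * s) z - s) + d * s
        = (\<Sum>k<d. (digit_count d k (N + d * s) z - s) + s)"
      by (simp add: sum.distrib)
    also have "\<dots> = (\<Sum>k<d. digit_count d k (N + d * s) z)"
      using frequent by (intro sum.cong) auto
    also have "\<dots> = N + d * s"
      by (rule sum_digit_count[OF z])
    finally have "(\<Sum>k<d. digit_count d k (N + d * s) z - s) = N" by simp
    from digit_count_realisable[OF this] show ?thesis
      using frequent by (metis le_add_diff_inverse2)
  qed
  then show ?thesis by metis
qed

lemma card_all_digits_frequent_ge:
  assumes "0 < d" and "0 < M" and "0 \<le> t" and "real s \<le> real M / real d - t"
  shows "1 - real d * exp (- 2 * t\<^sup>2 / real M) \<le> real (card (all_digits_frequent d M s)) / real d ^ M"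
proof -
  let ?G = "all_digits_frequent d M s"
  let ?B = "\<lambda>k. {z. z < d ^ M \<and> digit_count d k M z < s}"
  have "d ^ M = card {..<d ^ M}" by simp
  also have "\<dots> \<le> card (?G \<union> (\<Union>k<d. ?B k))"
    by (rule card_mono) (auto simp: all_digits_frequent_def not_le)
  also have "\<dots> \<le> card ?G + (\<Sum>k<d. card (?B k))"
    by (intro order.trans[OF card_Un_le] add_left_mono card_UN_le) simp
  finally have "real (d ^ M) \<le> real (card ?G + (\<Sum>k<d. card (?B k)))"
    by (simp only: of_nat_le_iff)
  then have "real d ^ M \<le> real (card ?G) + (\<Sum>k<d. real (card (?B k)))"
    by simp
  then have "(real d ^ M - real (card ?G)) / real d ^ M \<le> (\<Sum>k<d. real (card (?B k))) / real d ^ M"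
    by (intro divide_right_mono) auto
  then have "1 - real (card ?G) / real d ^ M \<le> (\<Sum>k<d. real (card (?B k))) / real d ^ M"
    using assms(1) by (simp add: diff_divide_distrib)
  also have "\<dots> = (\<Sum>k<d. real (card (?B k)) / real d ^ M)"
    by (rule sum_divide_distrib)
  also have "\<dots> \<le> (\<Sum>k<d. exp (- 2 * t\<^sup>2 / real M))"
  proof (rule sum_mono)
    fix k assume "k \<in> {..<d}"
    then show "real (card (?B k)) / real d ^ M \<le> exp (- 2 * t\<^sup>2 / real M)"
      using assms by (intro card_digit_count_less_le_exp) auto
  qed
  finally show ?thesis by simp
qed

lemma le_two_mult_Suc_power_triangular:
  assumes "2 \<le> d" and "1 \<le> M"
  shows "real d \<le> 2 * real (M + 1) ^ (d * (d - 1) div 2)"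
proof -
  have "d - 1 \<le> d * (d - 1) div 2"
    using div_le_mono[OF mult_le_mono1[OF assms(1)], of "d - 1" 2] by simp
  have "real d \<le> 2 ^ d" using less_exp[of d] by (metis of_nat_le_iff of_nat_numeral of_nat_power less_imp_le)
  also have "\<dots> = 2 * 2 ^ (d - 1)" using assms(1) by (simp flip: power_Suc)
  also have "(2::real) ^ (d - 1) \<le> 2 ^ (d * (d - 1) div 2)"
    using \<open>d - 1 \<le> _\<close> by (intro power_increasing) auto
  also have "(2::real) ^ (d * (d - 1) div 2) \<le> real (M + 1) ^ (d * (d - 1) div 2)"
    using assms(2) by (intro power_mono) auto
  finally show ?thesis by simp
qed

(* The prefactor 2 (M + 1)^(d (d - 1) / 2) is far from tight here: the union bound over the
   d digits only costs a factor d. *)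
lemma card_all_digits_frequent_ge_prefactor:
  assumes "2 \<le> d" and "1 \<le> N"
  shows "1 - 2 * real (N + d * s + 1) ^ (d * (d - 1) div 2)
               * exp (- (2 * real N ^ 2) / (real d ^ 2 * real (N + d * s)))
       \<le> real (card (all_digits_frequent d (N + d * s) s)) / real d ^ (N + d * s)"
proof -
  let ?M = "N + d * s"
  let ?E = "exp (- (2 * real N ^ 2) / (real d ^ 2 * real ?M))"
  have E: "exp (- 2 * (real N / real d)\<^sup>2 / real ?M) = ?E"
    by (simp add: power_divide)
  have "1 - real d * ?E \<le> real (card (all_digits_frequent d ?M s)) / real d ^ ?M"
    unfolding E[symmetric] using assms by (intro card_all_digits_frequent_ge) (auto simp: field_simps)
  moreover have "real d * ?E \<le> 2 * real (?M + 1) ^ (d * (d - 1) div 2) * ?E"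
    using le_two_mult_Suc_power_triangular[of d ?M] assms by (intro mult_right_mono) auto
  ultimately show ?thesis by linarith
qed

definition outer :: "nat \<Rightarrow> (nat \<Rightarrow> complex) \<Rightarrow> complex mat" where
  "outer n u = Matrix.mat n n (\<lambda>(i,j). u i * cnj (u j))"

definition mat_apply :: "complex mat \<Rightarrow> (nat \<Rightarrow> complex) \<Rightarrow> nat \<Rightarrow> complex" where
  "mat_apply A u a = (\<Sum>i<dim_col A. A $$ (a,i) * u i)"

lemma outer_carrier [simp]: "outer n u \<in> carrier_mat n n"
  by (simp add: outer_def)

lemma outer_cong: "(\<And>i. i < n \<Longrightarrow> u i = v i) \<Longrightarrow> outer n u = outer n v"
  unfolding outer_def by (intro eq_matI) auto

lemma msum_cong: "(\<And>k. k < K \<Longrightarrow> f k = g k) \<Longrightarrow> msum n m K f = msum n m K g"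
  unfolding msum_def by (intro eq_matI) auto

lemma sum_mult_cnj_sum:
  "(\<Sum>i\<in>I. f i) * cnj (\<Sum>j\<in>J. g j) = (\<Sum>j\<in>J. \<Sum>i\<in>I. f i * cnj (g j))"
  by (simp add: cnj_sum sum_distrib_left sum_distrib_right)

lemma mult_outer_adj:
  assumes A: "A \<in> carrier_mat m n"
  shows "A * outer n u * adj A = outer m (mat_apply A u)"
proof (rule eq_matI)
  fix a b assume "a < dim_row (outer m (mat_apply A u))" "b < dim_col (outer m (mat_apply A u))"
  then have a: "a < m" and b: "b < m" by (auto simp: outer_def)
  have "(A * outer n u * adj A) $$ (a, b)
      = (\<Sum>j<n. (\<Sum>i<n. A $$ (a,i) * (u i * cnj (u j))) * cnj (A $$ (b,j)))"
    using A a b by (simp add: index_mult_mat scalar_prod_def adj_def outer_def lessThan_atLeast0)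
  also have "\<dots> = (\<Sum>j<n. \<Sum>i<n. (A $$ (a,i) * u i) * cnj (A $$ (b,j) * u j))"
    by (simp add: sum_distrib_left sum_distrib_right mult_ac)
  also have "\<dots> = (\<Sum>i<n. A $$ (a,i) * u i) * cnj (\<Sum>j<n. A $$ (b,j) * u j)"
    by (rule sum_mult_cnj_sum[symmetric])
  also have "\<dots> = outer m (mat_apply A u) $$ (a,b)"
    using A a b by (simp add: outer_def mat_apply_def)
  finally show "(A * outer n u * adj A) $$ (a, b) = outer m (mat_apply A u) $$ (a,b)" .
qed (use A in \<open>auto simp: adj_def outer_def\<close>)

lemma expval_msum_outer:
  assumes "\<psi> \<in> carrier_mat m 1"
  shows "expval \<psi> (msum m m K (\<lambda>k. outer m (w k)))
       = of_real (\<Sum>k<K. (cmod (\<Sum>a<m. cnj (\<psi> $$ (a,0)) * w k a))\<^sup>2)"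
proof -
  have "expval \<psi> (msum m m K (\<lambda>k. outer m (w k)))
      = (\<Sum>b<m. (\<Sum>a<m. cnj (\<psi> $$ (a,0)) * (\<Sum>k<K. w k a * cnj (w k b))) * \<psi> $$ (b,0))"
    using assms
    by (simp add: expval_def index_mult_mat scalar_prod_def adj_def msum_def outer_def lessThan_atLeast0)
  also have "\<dots> = (\<Sum>b<m. \<Sum>a<m. \<Sum>k<K. (cnj (\<psi> $$ (a,0)) * w k a) * cnj (cnj (\<psi> $$ (b,0)) * w k b))"
    by (simp add: sum_distrib_left sum_distrib_right mult_ac)
  also have "\<dots> = (\<Sum>b<m. \<Sum>k<K. \<Sum>a<m. (cnj (\<psi> $$ (a,0)) * w k a) * cnj (cnj (\<psi> $$ (b,0)) * w k b))"
    by (rule sum.cong[OF refl], rule sum.swap)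
  also have "\<dots> = (\<Sum>k<K. \<Sum>b<m. \<Sum>a<m. (cnj (\<psi> $$ (a,0)) * w k a) * cnj (cnj (\<psi> $$ (b,0)) * w k b))"
    by (rule sum.swap)
  also have "\<dots> = (\<Sum>k<K. (\<Sum>a<m. cnj (\<psi> $$ (a,0)) * w k a) * cnj (\<Sum>a<m. cnj (\<psi> $$ (a,0)) * w k a))"
    by (rule sum.cong[OF refl], rule sum_mult_cnj_sum[symmetric])
  also have "\<dots> = of_real (\<Sum>k<K. (cmod (\<Sum>a<m. cnj (\<psi> $$ (a,0)) * w k a))\<^sup>2)"
    unfolding of_real_sum by (rule sum.cong[OF refl], rule complex_norm_square[symmetric])
  finally show ?thesis .
qed

lemma psd_outer: "psd n (outer n u)"
proof -
  have "(\<Sum>i<n. \<Sum>j<n. cnj (v i) * outer n u $$ (i,j) * v j)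
      = of_real ((cmod (\<Sum>i<n. cnj (v i) * u i))\<^sup>2)" for v
  proof -
    have "(\<Sum>i<n. \<Sum>j<n. cnj (v i) * outer n u $$ (i,j) * v j)
        = (\<Sum>j<n. \<Sum>i<n. (cnj (v i) * u i) * cnj (cnj (v j) * u j))"
      by (subst sum.swap) (intro sum.cong refl, simp add: outer_def mult_ac)
    also have "\<dots> = (\<Sum>i<n. cnj (v i) * u i) * cnj (\<Sum>i<n. cnj (v i) * u i)"
      by (rule sum_mult_cnj_sum[symmetric])
    finally show ?thesis by (simp only: complex_norm_square)
  qed
  then show ?thesis by (simp add: psd_def Let_def)
qed

lemma density_outer:
  assumes "(\<Sum>i<n. (cmod (u i))\<^sup>2) = 1"
  shows "Defs.density n (outer n u)"
proof -
  have "(\<Sum>i<n. outer n u $$ (i,i)) = of_real (\<Sum>i<n. (cmod (u i))\<^sup>2)"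
    unfolding of_real_sum complex_norm_square by (simp add: outer_def)
  then show ?thesis using assms by (simp add: Defs.density_def psd_outer)
qed

lemma kron_pow_carrier: "A \<in> carrier_mat r c \<Longrightarrow> kron_pow n A \<in> carrier_mat (r ^ n) (c ^ n)"
  by (induction n) (auto simp: kron_def)

lemma kron_pow_U_theta:
  assumes "x < d ^ n" "y < d ^ n"
  shows "kron_pow n (U_theta d \<theta>) $$ (x,y) = (if x = y then digit_phase d \<theta> n x else 0)"
  using assms
proof (induction n arbitrary: x y)
  case (Suc n)
  have "kron_pow n (U_theta d \<theta>) \<in> carrier_mat (d ^ n) (d ^ n)"
    using kron_pow_carrier[of "U_theta d \<theta>" d d n] by (simp add: U_theta_def)
  moreover have "x div d ^ n < d" "y div d ^ n < d" "0 < d ^ n"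
    using Suc.prems leading_digit_less by (auto intro: gr0I)
  ultimately show ?case
    using Suc.prems Suc.IH[of "x mod d ^ n" "y mod d ^ n"]
    by (auto simp: kron_def U_theta_def mult.commute nat_eq_iff_div_mod_eq[of x y "d ^ n"])
qed simp

lemma kron_pow_e_theta:
  assumes "x < d ^ n"
  shows "kron_pow n (e_theta d \<theta>) $$ (x,0) = digit_phase d \<theta> n x / of_real (sqrt (real d)) ^ n"
  using assms
proof (induction n arbitrary: x)
  case (Suc n)
  have "kron_pow n (e_theta d \<theta>) \<in> carrier_mat (d ^ n) 1"
    using kron_pow_carrier[of "e_theta d \<theta>" d 1 n] by (simp add: e_theta_def)
  moreover have "x div d ^ n < d" "0 < d ^ n"
    using Suc.prems leading_digit_less by (auto intro: gr0I)
  ultimately show ?case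
    using Suc.prems Suc.IH[of "x mod d ^ n"] by (simp add: kron_def e_theta_def mult.commute)
qed simp

lemma kron_diagonal_id_outer:
  assumes D: "D \<in> carrier_mat n n"
    and diag: "\<And>x y. x < n \<Longrightarrow> y < n \<Longrightarrow> D $$ (x,y) = (if x = y then p x else 0)"
  shows "kron D (1\<^sub>m r) * outer (n * r) \<phi> * adj (kron D (1\<^sub>m r))
       = outer (n * r) (\<lambda>i. p (i div r) * \<phi> i)"
proof -
  have V: "kron D (1\<^sub>m r) \<in> carrier_mat (n * r) (n * r)" using D by (simp add: kron_def)
  have "mat_apply (kron D (1\<^sub>m r)) \<phi> i = p (i div r) * \<phi> i" if i: "i < n * r" for i
  proof -
    have "0 < r" using i by (cases r) auto
    then have r: "0 < r" "i div r < n" "i mod r < r" using i by (auto simp: less_mult_imp_div_less)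
    have entry: "kron D (1\<^sub>m r) $$ (i,j) = (if j = i then p (i div r) else 0)" if j: "j < n * r" for j
    proof -
      have "j div r < n" "j mod r < r" using j r by (auto simp: less_mult_imp_div_less)
      then have "kron D (1\<^sub>m r) $$ (i,j)
          = (if i div r = j div r then p (i div r) else 0) * (if i mod r = j mod r then 1 else 0)"
        using D i j r diag by (simp add: kron_def)
      then show ?thesis by (auto simp: nat_eq_iff_div_mod_eq[of j i r])
    qed
    have "mat_apply (kron D (1\<^sub>m r)) \<phi> i = (\<Sum>j<n * r. if j = i then p (i div r) * \<phi> j else 0)"
      unfolding mat_apply_def using V by (intro sum.cong refl) (auto simp: entry)
    then show ?thesis using i by simp
  qed
  then show ?thesis unfolding mult_outer_adj[OF V] by (intro outer_cong)
qed

(* The Kraus operator A_(k div m) (x) <k mod m| from C^n (x) C^m to C^r; for k < T * m these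
   implement rho |-> sum_t A_t (tr_2 rho) A_t^*. *)
definition trace_out_kraus ::
    "nat \<Rightarrow> nat \<Rightarrow> nat \<Rightarrow> (nat \<Rightarrow> complex mat) \<Rightarrow> nat \<Rightarrow> complex mat" where
  "trace_out_kraus r n m A k = Matrix.mat r (n * m)
     (\<lambda>(a,i). if i mod m = k mod m then A (k div m) $$ (a, i div m) else 0)"

lemma trace_out_kraus_carrier [simp]: "trace_out_kraus r n m A k \<in> carrier_mat r (n * m)"
  by (simp add: trace_out_kraus_def)

lemma adj_mult_trace_out_kraus_index:
  assumes A: "A (k div m) \<in> carrier_mat r n" and i: "i < n * m" and j: "j < n * m"
  shows "(adj (trace_out_kraus r n m A k) * trace_out_kraus r n m A k) $$ (i,j)
       = (if i mod m = k mod m \<and> j mod m = k mod m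
          then (adj (A (k div m)) * A (k div m)) $$ (i div m, j div m) else 0)"
proof -
  have "0 < m" using i by (cases m) auto
  then have "i div m < n" "j div m < n" using i j by (auto simp: less_mult_imp_div_less)
  then show ?thesis
    using A i j by (auto simp: trace_out_kraus_def adj_def index_mult_mat scalar_prod_def)
qed

lemma msum_adj_mult_trace_out_kraus:
  assumes A: "\<And>t. t < T \<Longrightarrow> A t \<in> carrier_mat r n"
    and iso: "msum n n T (\<lambda>t. adj (A t) * A t) = 1\<^sub>m n"
  shows "msum (n * m) (n * m) (T * m)
           (\<lambda>k. adj (trace_out_kraus r n m A k) * trace_out_kraus r n m A k) = 1\<^sub>m (n * m)"
proof (rule eq_matI)
  fix i j assume "i < dim_row (1\<^sub>m (n * m))" "j < dim_col (1\<^sub>m (n * m))"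
  then have i: "i < n * m" and j: "j < n * m" by auto
  have "0 < m" using i by (cases m) auto
  then have m: "i mod m < m" "i div m < n" "j div m < n"
    using i j by (auto simp: less_mult_imp_div_less)
  let ?X = "\<lambda>t. (adj (A t) * A t) $$ (i div m, j div m)"
  have "msum (n * m) (n * m) (T * m)
          (\<lambda>k. adj (trace_out_kraus r n m A k) * trace_out_kraus r n m A k) $$ (i,j)
      = (\<Sum>t<T. \<Sum>b<m. (adj (trace_out_kraus r n m A (b + t * m))
                            * trace_out_kraus r n m A (b + t * m)) $$ (i,j))"
    using i j by (simp add: msum_def sum_mult_product)
  also have "\<dots> = (\<Sum>t<T. \<Sum>b<m. if b = i mod m then (if i mod m = j mod m then ?X t else 0) else 0)"
    using A i j by (intro sum.cong refl) (auto simp: adj_mult_trace_out_kraus_index)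
  also have "\<dots> = (if i mod m = j mod m then msum n n T (\<lambda>t. adj (A t) * A t) $$ (i div m, j div m) else 0)"
    using m by (simp add: msum_def)
  also have "\<dots> = 1\<^sub>m (n * m) $$ (i,j)"
    using i j m by (auto simp: iso nat_eq_iff_div_mod_eq[of i j m])
  finally show "msum (n * m) (n * m) (T * m)
          (\<lambda>k. adj (trace_out_kraus r n m A k) * trace_out_kraus r n m A k) $$ (i,j) = 1\<^sub>m (n * m) $$ (i,j)" .
qed (simp_all add: msum_def)

lemma is_channel_trace_out:
  assumes "\<And>t. t < T \<Longrightarrow> A t \<in> carrier_mat r n"
    and "msum n n T (\<lambda>t. adj (A t) * A t) = 1\<^sub>m n"
  shows "is_channel (n * m) r (\<lambda>\<rho>. msum r r (T * m)
           (\<lambda>k. trace_out_kraus r n m A k * \<rho> * adj (trace_out_kraus r n m A k)))"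
  unfolding is_channel_def
proof (intro exI[of _ "map (trace_out_kraus r n m A) [0..<T * m]"] conjI ballI allI)
  let ?Ks = "map (trace_out_kraus r n m A) [0..<T * m]"
  have "msum (n * m) (n * m) (length ?Ks) (\<lambda>k. adj (?Ks ! k) * ?Ks ! k)
      = msum (n * m) (n * m) (T * m) (\<lambda>k. adj (trace_out_kraus r n m A k) * trace_out_kraus r n m A k)"
    by (simp only: length_map length_upt diff_zero) (rule msum_cong, simp)
  then show "msum (n * m) (n * m) (length ?Ks) (\<lambda>k. adj (?Ks ! k) * ?Ks ! k) = 1\<^sub>m (n * m)"
    using msum_adj_mult_trace_out_kraus[OF assms] by simp
  show "msum r r (T * m) (\<lambda>k. trace_out_kraus r n m A k * \<rho> * adj (trace_out_kraus r n m A k))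
      = msum r r (length ?Ks) (\<lambda>k. ?Ks ! k * \<rho> * adj (?Ks ! k))" for \<rho>
    by (simp only: length_map length_upt diff_zero) (rule msum_cong, simp)
qed auto

lemma add_mult_less_mult: "b < m \<Longrightarrow> x < n \<Longrightarrow> b + x * m < n * (m::nat)"
  using mult_le_mono1[of "Suc x" n m] by simp

lemma mat_apply_trace_out_kraus:
  assumes "0 < m" and "a < r"
  shows "mat_apply (trace_out_kraus r n m A k) v a = (\<Sum>x<n. A (k div m) $$ (a,x) * v (k mod m + x * m))"
proof -
  have "mat_apply (trace_out_kraus r n m A k) v a
      = (\<Sum>i<n * m. trace_out_kraus r n m A k $$ (a,i) * v i)"
    by (simp add: mat_apply_def carrier_matD[OF trace_out_kraus_carrier])
  also have "\<dots> = (\<Sum>x<n. \<Sum>b<m. trace_out_kraus r n m A k $$ (a, b + x * m) * v (b + x * m))"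
    by (rule sum_mult_product)
  also have "\<dots> = (\<Sum>x<n. \<Sum>b<m. if b = k mod m then A (k div m) $$ (a,x) * v (b + x * m) else 0)"
    using assms by (intro sum.cong refl) (simp add: trace_out_kraus_def add_mult_less_mult)
  finally show ?thesis using assms by simp
qed

locale fiber_encoding =
  fixes n r :: nat and G :: "nat set" and f :: "nat \<Rightarrow> nat"
  assumes G_subset: "G \<subseteq> {..<r}"
    and f_range: "f ` G \<subseteq> {..<n}"
    and n_le_r: "n \<le> r"
    and G_nonempty: "G \<noteq> {}"
begin

definition fiber :: "nat \<Rightarrow> nat set" where
  "fiber x = {z \<in> G. f z = x}"

(* sum_x sqrt(|f^-1 x| / |G|) |x> (x) |0> in C^n (x) C^r *)
definition state :: "nat \<Rightarrow> complex" where
  "state i = (if i mod r = 0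
              then of_real (sqrt (real (card (fiber (i div r))) / real (card G))) else 0)"

definition spread :: "complex mat" where
  "spread = Matrix.mat r n
     (\<lambda>(a,x). if a \<in> G \<and> f a = x then of_real (1 / sqrt (real (card (fiber x)))) else 0)"

(* Sends the x with empty fiber to distinct basis vectors (possible as n <= r), completing spread
   to an isometry. *)
definition pad :: "complex mat" where
  "pad = Matrix.mat r n (\<lambda>(a,x). if a = x \<and> fiber x = {} then 1 else 0)"

definition kraus :: "nat \<Rightarrow> complex mat" where
  "kraus t = (if t = 0 then spread else pad)"

definition channel :: "complex mat \<Rightarrow> complex mat" where
  "channel \<rho> = msum r r (2 * r)
     (\<lambda>k. trace_out_kraus r n r kraus k * \<rho> * adj (trace_out_kraus r n r kraus k))"

lemma finite_G: "finite G"
  using G_subset finite_subset by blast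

lemma card_G_pos: "0 < card G"
  using finite_G G_nonempty by (simp add: card_gt_0_iff)

lemma r_pos: "0 < r"
  using G_subset G_nonempty by auto

lemma finite_fiber: "finite (fiber x)"
  by (simp add: fiber_def finite_G)

lemma sum_card_fiber: "(\<Sum>x<n. card (fiber x)) = card G"
proof -
  have "G = (\<Union>x<n. fiber x)" using f_range by (auto simp: fiber_def)
  moreover have "card (\<Union>x<n. fiber x) = (\<Sum>x<n. card (fiber x))"
    by (rule card_UN_disjoint) (auto simp: fiber_def finite_G)
  ultimately show ?thesis by simp
qed

lemma density_state: "Defs.density (n * r) (outer (n * r) state)"
proof (rule density_outer)
  have "(\<Sum>i<n * r. (cmod (state i))\<^sup>2) = (\<Sum>x<n. \<Sum>b<r. (cmod (state (b + x * r)))\<^sup>2)"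
    by (rule sum_mult_product)
  also have "\<dots> = (\<Sum>x<n. real (card (fiber x)) / real (card G))"
  proof (rule sum.cong[OF refl])
    fix x
    have "(\<Sum>b<r. (cmod (state (b + x * r)))\<^sup>2)
        = (\<Sum>b<r. if b = 0 then real (card (fiber x)) / real (card G) else 0)"
      using r_pos by (intro sum.cong refl) (auto simp: state_def)
    then show "(\<Sum>b<r. (cmod (state (b + x * r)))\<^sup>2) = real (card (fiber x)) / real (card G)"
      using r_pos by simp
  qed
  also have "\<dots> = 1"
    using sum_card_fiber card_G_pos by (simp flip: sum_divide_distrib of_nat_sum)
  finally show "(\<Sum>i<n * r. (cmod (state i))\<^sup>2) = 1" .
qed

lemma adj_spread_mult_index:
  assumes "x < n" and "y < n"
  shows "(adj spread * spread) $$ (x,y) = (if x = y \<and> fiber x \<noteq> {} then 1 else 0)"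
proof -
  let ?c = "real (card (fiber x))"
  have sq: "(1 / sqrt ?c) * (1 / sqrt ?c) = 1 / ?c"
    using real_sqrt_pow2[of ?c] by (simp add: power2_eq_square)
  have "(adj spread * spread) $$ (x,y) = (\<Sum>a<r. cnj (spread $$ (a,x)) * spread $$ (a,y))"
    using assms by (simp add: spread_def adj_def index_mult_mat scalar_prod_def lessThan_atLeast0)
  also have "\<dots> = (\<Sum>a<r. if a \<in> fiber x \<and> x = y then of_real (1 / ?c) else 0)"
  proof (rule sum.cong[OF refl])
    fix a assume "a \<in> {..<r}"
    then show "cnj (spread $$ (a,x)) * spread $$ (a,y) = (if a \<in> fiber x \<and> x = y then of_real (1 / ?c) else 0)"
      using assms by (auto simp: spread_def fiber_def simp flip: of_real_mult sq)
  qed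
  also have "\<dots> = (if x = y then of_nat (card ({..<r} \<inter> fiber x)) * of_real (1 / ?c) else 0)"
    by (simp add: sum.If_cases flip: Int_def)
  also have "{..<r} \<inter> fiber x = fiber x" using G_subset by (auto simp: fiber_def)
  finally show ?thesis by (simp add: finite_fiber)
qed

lemma adj_pad_mult_index:
  assumes "x < n" and "y < n"
  shows "(adj pad * pad) $$ (x,y) = (if x = y \<and> fiber x = {} then 1 else 0)"
proof -
  have "(adj pad * pad) $$ (x,y) = (\<Sum>a<r. cnj (pad $$ (a,x)) * pad $$ (a,y))"
    using assms by (simp add: pad_def adj_def index_mult_mat scalar_prod_def lessThan_atLeast0)
  also have "\<dots> = (\<Sum>a<r. if a = x then (if x = y \<and> fiber x = {} then 1 else 0) else 0)"
    using assms by (intro sum.cong refl) (auto simp: pad_def)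
  finally show ?thesis using assms n_le_r by simp
qed

lemma msum_adj_mult_kraus: "msum n n 2 (\<lambda>t. adj (kraus t) * kraus t) = 1\<^sub>m n"
  by (rule eq_matI)
    (auto simp: msum_def numeral_2_eq_2 kraus_def adj_spread_mult_index adj_pad_mult_index)

lemma is_channel_channel: "is_channel (n * r) r channel"
proof -
  have "kraus t \<in> carrier_mat r n" for t by (simp add: kraus_def spread_def pad_def)
  then show ?thesis
    using is_channel_trace_out[of 2 kraus r n r, OF _ msum_adj_mult_kraus]
    by (simp add: channel_def[abs_def])
qed

lemma mat_apply_spread_phased_state:
  assumes "a < r"
  shows "mat_apply (trace_out_kraus r n r kraus 0) (\<lambda>i. p (i div r) * state i) a
       = (if a \<in> G then p (f a) / of_real (sqrt (real (card G))) else 0)"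
proof -
  have "mat_apply (trace_out_kraus r n r kraus 0) (\<lambda>i. p (i div r) * state i) a
      = (\<Sum>x<n. spread $$ (a,x) * (p x * of_real (sqrt (real (card (fiber x)) / real (card G)))))"
    using assms r_pos by (simp add: mat_apply_trace_out_kraus kraus_def state_def)
  also have "\<dots> = (if a \<in> G then p (f a) / of_real (sqrt (real (card G))) else 0)"
  proof (cases "a \<in> G")
    case True
    then have fa: "f a < n" and "a \<in> fiber (f a)" using f_range by (auto simp: fiber_def)
    then have "0 < card (fiber (f a))" using finite_fiber by (auto simp: card_gt_0_iff)
    let ?c = "real (card (fiber (f a)))"
    have "(\<Sum>x<n. spread $$ (a,x) * (p x * of_real (sqrt (real (card (fiber x)) / real (card G)))))
        = (\<Sum>x<n. if x = f a then of_real (1 / sqrt ?c) * (p x * of_real (sqrt (?c / real (card G)))) else 0)"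
      using assms True by (intro sum.cong refl) (auto simp: spread_def)
    also have "\<dots> = p (f a) * (of_real (1 / sqrt ?c) * of_real (sqrt ?c) / of_real (sqrt (real (card G))))"
      using fa by (simp add: real_sqrt_divide)
    also have "of_real (1 / sqrt ?c) * of_real (sqrt ?c) = (1 :: complex)"
      using \<open>0 < card (fiber (f a))\<close> by (simp flip: of_real_mult)
    finally have "(\<Sum>x<n. spread $$ (a,x) * (p x * of_real (sqrt (real (card (fiber x)) / real (card G)))))
        = p (f a) / of_real (sqrt (real (card G)))" by simp
    then show ?thesis using True by simp
  qed (use assms in \<open>simp add: spread_def\<close>)
  finally show ?thesis .
qed

lemma expval_channel_phased_state:
  fixes p :: "nat \<Rightarrow> complex"
  assumes \<psi>: "\<psi> \<in> carrier_mat r 1"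
  defines "F \<equiv> expval \<psi> (channel (outer (n * r) (\<lambda>i. p (i div r) * state i)))"
  shows "Im F = 0"
    and "(cmod (\<Sum>a\<in>G. cnj (\<psi> $$ (a,0)) * p (f a)))\<^sup>2 / real (card G) \<le> Re F"
proof -
  let ?v = "\<lambda>i. p (i div r) * state i"
  let ?\<beta> = "\<lambda>k. \<Sum>a<r. cnj (\<psi> $$ (a,0)) * mat_apply (trace_out_kraus r n r kraus k) ?v a"
  have "channel (outer (n * r) ?v) = msum r r (2 * r) (\<lambda>k. outer r (mat_apply (trace_out_kraus r n r kraus k) ?v))"
    unfolding channel_def
  proof (rule msum_cong)
    fix k
    show "trace_out_kraus r n r kraus k * outer (n * r) ?v * adj (trace_out_kraus r n r kraus k)
        = outer r (mat_apply (trace_out_kraus r n r kraus k) ?v)"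
      by (rule mult_outer_adj[OF trace_out_kraus_carrier])
  qed
  then have F: "F = of_real (\<Sum>k<2 * r. (cmod (?\<beta> k))\<^sup>2)"
    unfolding F_def by (simp add: expval_msum_outer[OF \<psi>])
  then show "Im F = 0" by simp
  have "?\<beta> 0 = (\<Sum>a<r. if a \<in> G then cnj (\<psi> $$ (a,0)) * p (f a) / of_real (sqrt (real (card G))) else 0)"
    by (intro sum.cong refl) (simp add: mat_apply_spread_phased_state)
  also have "\<dots> = (\<Sum>a\<in>G. cnj (\<psi> $$ (a,0)) * p (f a)) / of_real (sqrt (real (card G)))"
    using G_subset by (simp add: sum.If_cases Int_absorb1 sum_divide_distrib flip: Int_def)
  finally have "(cmod (\<Sum>a\<in>G. cnj (\<psi> $$ (a,0)) * p (f a)))\<^sup>2 / real (card G) = (cmod (?\<beta> 0))\<^sup>2"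
    by (simp add: norm_divide power_divide)
  also have "\<dots> \<le> (\<Sum>k<2 * r. (cmod (?\<beta> k))\<^sup>2)"
    using r_pos by (intro member_le_sum) auto
  finally show "(cmod (\<Sum>a\<in>G. cnj (\<psi> $$ (a,0)) * p (f a)))\<^sup>2 / real (card G) \<le> Re F"
    using F by simp
qed

end


lemma norm_overlap_e_theta_digit_phase:
  assumes G: "G \<subseteq> {..<d ^ M}" and f: "f ` G \<subseteq> {..<d ^ N}"
    and counts: "\<And>z k. z \<in> G \<Longrightarrow> k < d \<Longrightarrow> digit_count d k N (f z) + s = digit_count d k M z"
  shows "cmod (\<Sum>a\<in>G. cnj (kron_pow M (e_theta d \<theta>) $$ (a,0)) * digit_phase d \<theta> N (f a))
       = real (card G) / sqrt (real d) ^ M"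
proof -
  let ?g = "cnj (\<Prod>k<d. phase \<theta> k ^ s)" and ?sq = "of_real (sqrt (real d)) :: complex"
  have "(\<Sum>a\<in>G. cnj (kron_pow M (e_theta d \<theta>) $$ (a,0)) * digit_phase d \<theta> N (f a))
      = (\<Sum>a\<in>G. ?g / ?sq ^ M)"
  proof (rule sum.cong[OF refl])
    fix a assume a: "a \<in> G"
    then have "a < d ^ M" "f a < d ^ N" using G f by auto
    then show "cnj (kron_pow M (e_theta d \<theta>) $$ (a,0)) * digit_phase d \<theta> N (f a) = ?g / ?sq ^ M"
      using digit_phase_shift[of "f a" d N a M s \<theta>] counts[OF a]
      by (simp add: kron_pow_e_theta field_simps)
  qed
  then show ?thesis by (simp add: norm_mult norm_divide norm_power prod_norm[symmetric])
qed

lemma exists_state_channel_fidelity_ge: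
  assumes "0 < d" and "N \<le> M" and G: "G \<subseteq> {..<d ^ M}" "G \<noteq> {}" and f: "f ` G \<subseteq> {..<d ^ N}"
    and counts: "\<And>z k. z \<in> G \<Longrightarrow> k < d \<Longrightarrow> digit_count d k N (f z) + s = digit_count d k M z"
  shows "\<exists>\<sigma> C. Defs.density (d ^ N * 1 * d ^ M) \<sigma> \<and> is_channel (d ^ N * 1 * d ^ M) (d ^ M) C \<and>
           (\<forall>\<theta>. let V = kron (kron_pow N (U_theta d \<theta>)) (1\<^sub>m (1 * d ^ M));
                    F = expval (kron_pow M (e_theta d \<theta>)) (C (V * \<sigma> * adj V))
                in Im F = 0 \<and> real (card G) / real d ^ M \<le> Re F)"
proof -
  interpret fiber_encoding "d ^ N" "d ^ M" G f
    using assms by unfold_locales (auto intro: power_increasing)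
  have "Im F = 0 \<and> real (card G) / real d ^ M \<le> Re F"
    if V: "V = kron (kron_pow N (U_theta d \<theta>)) (1\<^sub>m (d ^ M))"
      and F: "F = expval (kron_pow M (e_theta d \<theta>)) (channel (V * outer (d ^ N * d ^ M) state * adj V))"
    for \<theta> V F
  proof -
    have \<psi>: "kron_pow M (e_theta d \<theta>) \<in> carrier_mat (d ^ M) 1"
      using kron_pow_carrier[of "e_theta d \<theta>" d 1 M] by (simp add: e_theta_def)
    have "V * outer (d ^ N * d ^ M) state * adj V
        = outer (d ^ N * d ^ M) (\<lambda>i. digit_phase d \<theta> N (i div d ^ M) * state i)"
      unfolding V
    proof (rule kron_diagonal_id_outer)
      show "kron_pow N (U_theta d \<theta>) \<in> carrier_mat (d ^ N) (d ^ N)"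
        using kron_pow_carrier[of "U_theta d \<theta>" d d N] by (simp add: U_theta_def)
    qed (simp add: kron_pow_U_theta)
    then have "Im F = 0"
      and "(cmod (\<Sum>a\<in>G. cnj (kron_pow M (e_theta d \<theta>) $$ (a,0)) * digit_phase d \<theta> N (f a)))\<^sup>2
             / real (card G) \<le> Re F"
      unfolding F using expval_channel_phased_state[OF \<psi>] by simp_all
    moreover have "(sqrt (real d) ^ M)\<^sup>2 = (sqrt (real d))\<^sup>2 ^ M"
      by (metis power_mult mult.commute)
    ultimately show ?thesis
      using card_G_pos norm_overlap_e_theta_digit_phase[OF G(1) f counts]
      by (simp add: power_divide) (simp add: power2_eq_square)
  qed
  then show ?thesis using density_state is_channel_channel
    by (intro exI[of _ "outer (d ^ N * d ^ M) state"] exI[of _ channel]) (simp add: Let_def)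
qed

theorem mainTheorem7:
  fixes d N M :: nat
  assumes "d \<ge> 2" and "1 \<le> N" and "N \<le> M" and "d dvd (M - N)"
  shows "\<exists>(dA :: nat) (\<sigma> :: complex mat) (C :: complex mat \<Rightarrow> complex mat).
           dA \<ge> 1 \<and>
           Defs.density (d ^ N * dA * d ^ M) \<sigma> \<and>
           is_channel (d ^ N * dA * d ^ M) (d ^ M) C \<and>
           (\<forall>\<theta> :: nat \<Rightarrow> real. (\<forall>k \<in> {1..d-1}. 0 \<le> \<theta> k \<and> \<theta> k < 2 * pi) \<longrightarrow>
              (let V = kron (kron_pow N (U_theta d \<theta>)) (1\<^sub>m (dA * d ^ M));
                   F = expval (kron_pow M (e_theta d \<theta>)) (C (V * \<sigma> * adj V))
               in Im F = 0 \<and>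
                  Re F \<ge> 1 - 2 * real (M + 1) ^ (d * (d - 1) div 2)
                               * exp (- (2 * real N ^ 2) / (real d ^ 2 * real M))))"
proof -
  define s where "s = (M - N) div d"
  have M: "M = N + d * s" using assms(3,4) by (simp add: s_def)
  let ?G = "all_digits_frequent d M s"
  obtain f where f: "\<forall>z\<in>?G. f z < d ^ N \<and> (\<forall>k<d. digit_count d k N (f z) + s = digit_count d k M z)"
    using exists_digit_count_reduction[of d N s] unfolding M by blast
  have "?G \<subseteq> {..<d ^ M}" and "?G \<noteq> {}"
    using all_digits_frequent_nonempty[of d N s] assms(1) M by (auto simp: all_digits_frequent_def)
  then obtain \<sigma> C where "Defs.density (d ^ N * 1 * d ^ M) \<sigma>" "is_channel (d ^ N * 1 * d ^ M) (d ^ M) C"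
    and fidelity: "\<forall>\<theta>. let V = kron (kron_pow N (U_theta d \<theta>)) (1\<^sub>m (1 * d ^ M));
                           F = expval (kron_pow M (e_theta d \<theta>)) (C (V * \<sigma> * adj V))
                       in Im F = 0 \<and> real (card ?G) / real d ^ M \<le> Re F"
    using exists_state_channel_fidelity_ge[of d N M ?G f s] assms f by auto
  moreover have "1 - 2 * real (M + 1) ^ (d * (d - 1) div 2) * exp (- (2 * real N ^ 2) / (real d ^ 2 * real M))
      \<le> real (card ?G) / real d ^ M"
    using card_all_digits_frequent_ge_prefactor[of d N s] assms M by simp
  ultimately show ?thesis unfolding Let_def
    by (intro exI[of _ 1] exI[of _ \<sigma>] exI[of _ C]) (auto dest: order.trans)
qed

end
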